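(* Let $\lambda\ge1$ and let $\nu_\lambda$ be the probability measure on $[-2,2]$ with density proportional to $\cos[(1-\frac1\lambda)\arcsin\frac x2]\,(4-x^2)^{-1/(2\lambda)}\mathbf 1_{(-2,2)}(x)$. Then the normalizing constant is $$c_\lambda:=\int_{-2}^2\cos\!\Big[\Big(1-\frac1\lambda\Big)\arcsin\frac x2\Big](4-x^2)^{-1/(2\lambda)}dx=2^{1-1/\lambda}\sqrt\pi\,\frac{\Gamma(1-\frac1{2\lambda})\Gamma(\frac32-\frac1{2\lambda})}{\Gamma(2-\frac1\lambda)},$$ the odd moments vanish, and for every integer $n\ge0$ $$m^\lambda_{2n}:=\int x^{2n}\nu_\lambda(dx)=2^{2n}\,{}_3F_2\!\left(\begin{matrix}-n,\;1-\frac1{2\lambda},\;\frac32-\frac1{2\lambda}\\ 2-\frac1\lambda,\;1\end{matrix};1\right).$$ Moreover, with $y=1/\lambda$, $m^\lambda_{2n}=\sum_{k=0}^n\binom nk 4^{n-k}\frac{(-1)^k}{k!}\prod_{m=k+2}^{2k+1}(m-y)$, so $m^\lambda_{2n}$ is a polynomial in $1/\lambda$.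
   Context: ${}_3F_2\left(\begin{matrix}a_1,a_2,a_3\\ b_1,b_2\end{matrix};x\right)=\sum_{k\ge0}\frac{(a_1)_k(a_2)_k(a_3)_k}{(b_1)_k(b_2)_k}\frac{x^k}{k!}$, with Pochhammer symbol $(a)_0=1$, $(a)_k=a(a+1)\cdots(a+k-1)$; for $a_1=-n$ the series terminates. An empty product equals $1$. *)

theory Defs
  imports "HOL-Probability.Probability"
begin

definition hyp3F2 :: "real \<Rightarrow> real \<Rightarrow> real \<Rightarrow> real \<Rightarrow> real \<Rightarrow> real \<Rightarrow> real" where
  "hyp3F2 a1 a2 a3 b1 b2 x =
     (\<Sum>k. pochhammer a1 k * pochhammer a2 k * pochhammer a3 k
            / (pochhammer b1 k * pochhammer b2 k) * x ^ k / fact k)"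

definition nu_dens :: "real \<Rightarrow> real \<Rightarrow> real" where
  "nu_dens lam x = cos ((1 - 1 / lam) * arcsin (x / 2)) * (4 - x^2) powr (- 1 / (2 * lam))"

definition c_const :: "real \<Rightarrow> real" where
  "c_const lam = (LBINT x=-2..2. nu_dens lam x)"

definition nu :: "real \<Rightarrow> real measure" where
  "nu lam = density lborel
     (\<lambda>x. ennreal (indicator {-2<..<2} x * nu_dens lam x / c_const lam))"

end

theory Submission
  imports Defs
begin

(*
  Substituting x = 2 sin t (t in (-pi/2, pi/2)) turns the density into
  nu_dens lam (2 sin t) * 2 cos t = (2 cos t) powr a * cos (a t),   a = 1 - 1/lam in [0,1).
  Writing (2 sin t)^(2n) = (4 - (2 cos t)^2)^n and expanding binomially, every even moment
  becomes a finite combination of the classical integrals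
     integral over (-pi/2, pi/2) of (2 cos t) powr b * cos ((b - 2k) t) = pi * (b gchoose k),  b >= 0,
  which we prove by Abel summation: for r < 1 the function Re (e^(-2ikt) (1 + r e^(2it))^b) is a
  uniformly convergent cosine series whose integral is pi (b gchoose k) r^k, and we let r -> 1
  by dominated convergence.  This gives c_lam = pi and the even moments as an explicit sum;
  odd moments vanish because the density is even.  Pure algebra with Pochhammer symbols then
  rewrites the sum as the product formula and as the terminating 3F2, and Legendre's duplication
  formula identifies the Gamma expression with pi.  Finally, generic facts about densities
  restricted to a set transfer everything to the probability measure nu lam.
*)

section \<open>A family of trigonometric integrals\<close>

lemma integral_cos_even_multiple:
  fixes j :: int
  shows "((\<lambda>t. cos (2 * of_int j * t)) has_integral (if j = 0 then pi else 0)) {-pi/2..pi/2}"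
proof (cases "j = 0")
  case True
  have "((\<lambda>x. 1::real) has_integral pi) {-pi/2..pi/2}"
    using has_integral_const_real[of "1::real" "-pi/2" "pi/2"] by simp
  then show ?thesis using True by simp
next
  case False
  have deriv: "((\<lambda>t. sin (2 * of_int j * t) / (2 * of_int j)) has_real_derivative cos (2 * of_int j * t))
      (at t within {-pi/2..pi/2})" for t
    using False by (auto intro!: derivative_eq_intros)
  have "((\<lambda>t. cos (2 * of_int j * t)) has_integral
        (sin (2 * of_int j * (pi/2)) / (2 * of_int j) - sin (2 * of_int j * (-pi/2)) / (2 * of_int j))) {-pi/2..pi/2}"
    by (rule fundamental_theorem_of_calculus, simp,
        rule deriv[unfolded has_real_derivative_iff_has_vector_derivative])
  moreover have "sin (2 * of_int j * (pi/2)) = 0" "sin (2 * of_int j * (-pi/2)) = 0"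
    using sin_npi_int[of j] sin_npi_int[of "-j"] by (simp_all add: mult.commute)
  ultimately show ?thesis using False by simp
qed

text \<open>The Abel-regularised kernel \<open>Re (e^(-2ikt) (1 + r e^(2it))^b)\<close>; at \<open>r = 1\<close> it is the
  integrand of the target integral, for \<open>r < 1\<close> it expands into a cosine series.\<close>
definition abel_kernel :: "real \<Rightarrow> nat \<Rightarrow> real \<Rightarrow> real \<Rightarrow> real" where
  "abel_kernel b k r t = Re (cis (- 2 * real k * t) * (1 + complex_of_real r * cis (2 * t)) powr complex_of_real b)"

lemma complex_of_real_gchoose: "(complex_of_real b gchoose n) = complex_of_real (b gchoose n)"
  by (simp add: gbinomial_prod_rev)

text \<open>Newton's binomial series for \<open>(1 + r e^(2it))^b\<close>, taken in real part.\<close>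
lemma abel_kernel_sums:
  assumes "0 \<le> r" "r < 1"
  shows "(\<lambda>m. (b gchoose m) * r ^ m * cos (2 * of_int (int m - int k) * t)) sums abel_kernel b k r t"
proof -
  have "norm (complex_of_real r * cis (2 * t)) < 1" using assms by (simp add: norm_mult)
  from gen_binomial_complex[OF this, of "complex_of_real b"]
  have "(\<lambda>n. cis (- 2 * real k * t) * ((complex_of_real b gchoose n) * (complex_of_real r * cis (2 * t)) ^ n))
     sums (cis (- 2 * real k * t) * (1 + complex_of_real r * cis (2 * t)) powr complex_of_real b)"
    by (rule sums_mult)
  from sums_Re[OF this] show ?thesis
    unfolding abel_kernel_def
  proof (rule back_subst[of "\<lambda>f. f sums _"], intro ext)
    fix m
    have power: "(complex_of_real r * cis (2 * t)) ^ m = complex_of_real (r ^ m) * cis (real m * (2 * t))"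
      by (simp only: power_mult_distrib Complex.DeMoivre of_real_power)
    have shift: "cis (- 2 * real k * t) * cis (real m * (2 * t)) = cis (2 * of_int (int m - int k) * t)"
      by (simp add: cis_mult algebra_simps)
    show "Re (cis (- 2 * real k * t) * ((complex_of_real b gchoose m) * (complex_of_real r * cis (2 * t)) ^ m))
       = (b gchoose m) * r ^ m * cos (2 * of_int (int m - int k) * t)"
      unfolding power complex_of_real_gchoose using shift
      by (simp add: algebra_simps flip: of_real_mult)
  qed
qed

lemma gchoose_abs_summable:
  fixes b r :: real
  assumes "\<bar>r\<bar> < 1"
  shows "summable (\<lambda>m. \<bar>(b gchoose m) * r ^ m\<bar>)"
proof -
  have "ereal (norm r) < conv_radius (\<lambda>n. b gchoose n)"
    using assms by (simp add: conv_radius_gchoose)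
  from abs_summable_in_conv_radius[OF this] show ?thesis by simp
qed

text \<open>For \<open>r < 1\<close> integrate the cosine series termwise: only the term \<open>m = k\<close> survives.\<close>
lemma abel_kernel_integral:
  assumes "0 \<le> r" "r < 1"
  shows "(abel_kernel b k r has_integral pi * (b gchoose k) * r ^ k) {-pi/2..pi/2}"
proof -
  define c where "c m = (b gchoose m) * r ^ m" for m
  define f where "f N t = (\<Sum>m<N. c m * cos (2 * of_int (int m - int k) * t))" for N t
  have summ: "summable (\<lambda>m. \<bar>c m\<bar>)"
    unfolding c_def using assms by (intro gchoose_abs_summable) simp
  have partial_integral: "(f N has_integral (if k < N then pi * (b gchoose k) * r ^ k else 0)) {-pi/2..pi/2}" for N
  proof -
    have "(f N has_integral (\<Sum>m<N. c m * (if int m - int k = 0 then pi else 0))) {-pi/2..pi/2}"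
      unfolding f_def
      by (intro has_integral_sum finite_lessThan has_integral_mult_right integral_cos_even_multiple)
    moreover have "(\<Sum>m<N. c m * (if int m - int k = 0 then pi else 0)) = (\<Sum>m<N. if m = k then c k * pi else 0)"
      by (intro sum.cong) auto
    moreover have "\<dots> = (if k < N then pi * (b gchoose k) * r ^ k else 0)"
      by (simp add: sum.delta c_def)
    ultimately show ?thesis by simp
  qed
  have bound: "norm (f N t) \<le> (\<Sum>m. \<bar>c m\<bar>)" for N t
  proof -
    have "norm (f N t) \<le> (\<Sum>m<N. \<bar>c m * cos (2 * of_int (int m - int k) * t)\<bar>)"
      unfolding f_def real_norm_def by (rule sum_abs)
    also have "\<dots> \<le> (\<Sum>m<N. \<bar>c m\<bar>)"
      by (intro sum_mono) (simp add: abs_mult mult_left_le)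
    also have "\<dots> \<le> (\<Sum>m. \<bar>c m\<bar>)" by (intro sum_le_suminf summ) auto
    finally show ?thesis .
  qed
  have conv: "(\<lambda>N. f N t) \<longlonglongrightarrow> abel_kernel b k r t" for t
    using abel_kernel_sums[OF assms, of b k t] unfolding sums_def f_def c_def by simp
  have f_int: "f N integrable_on {-pi/2..pi/2}" for N using partial_integral by blast
  note dc = dominated_convergence[of f "{-pi/2..pi/2}" "\<lambda>_. \<Sum>m. \<bar>c m\<bar>" "abel_kernel b k r",
      OF f_int integrable_const_ivl bound conv]
  have "(\<lambda>N. integral {-pi/2..pi/2} (f N)) \<longlonglongrightarrow> pi * (b gchoose k) * r ^ k"
  proof (rule tendsto_eventually)
    show "\<forall>\<^sub>F N in sequentially. integral {-pi/2..pi/2} (f N) = pi * (b gchoose k) * r ^ k"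
      using eventually_gt_at_top[of k]
      by eventually_elim (use partial_integral integral_unique in metis)
  qed
  then have "integral {-pi/2..pi/2} (abel_kernel b k r) = pi * (b gchoose k) * r ^ k"
    using dc(2) LIMSEQ_unique by blast
  with dc(1) show ?thesis using integrable_integral by metis
qed

text \<open>At \<open>r = 1\<close>: \<open>1 + e^(2it) = 2 cos t \<cdot> e^(it)\<close>, so the kernel is the target integrand.\<close>
lemma abel_kernel_at_one:
  assumes "-pi/2 < t" "t < pi/2"
  shows "abel_kernel b k 1 t = (2 * cos t) powr b * cos ((b - 2 * real k) * t)"
proof -
  define u where "u = 2 * cos t"
  have u: "u > 0" using assms unfolding u_def by (simp add: cos_gt_zero_pi)
  have polar: "1 + cis (2 * t) = exp (complex_of_real (ln u) + \<i> * complex_of_real t)"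
  proof -
    have "exp (complex_of_real (ln u) + \<i> * complex_of_real t) = complex_of_real u * cis t"
      using u by (simp add: exp_add exp_of_real cis_conv_exp[symmetric])
    also have "\<dots> = 1 + cis (2 * t)"
      unfolding u_def
      by (simp add: complex_eq_iff cos_double_cos power2_eq_square sin_double)
    finally show ?thesis by simp
  qed
  have "ln (1 + cis (2 * t)) = complex_of_real (ln u) + \<i> * complex_of_real t"
    unfolding polar using assms by (intro Ln_exp) auto
  then have "(1 + cis (2 * t)) powr complex_of_real b
      = exp (complex_of_real b * (complex_of_real (ln u) + \<i> * complex_of_real t))"
    unfolding powr_def by (simp add: polar)
  also have "\<dots> = complex_of_real (u powr b) * cis (b * t)"
  proof -
    have "exp (complex_of_real b * complex_of_real (ln u)) = complex_of_real (exp (b * ln u))"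
      by (simp only: of_real_mult[symmetric] exp_of_real)
    then show ?thesis
      using u by (simp add: algebra_simps exp_add cis_conv_exp powr_def)
  qed
  finally have "(1 + cis (2 * t)) powr complex_of_real b = complex_of_real (u powr b) * cis (b * t)" .
  then show ?thesis unfolding abel_kernel_def of_real_1 mult_1_left u_def[symmetric]
    by (simp add: cis_mult algebra_simps cos_diff)
qed

text \<open>Uniform bound \<open>|1 + r e^(2it)|^b \<le> 2^b\<close>, the dominating function for \<open>r \<rightarrow> 1\<close>.\<close>
lemma abel_kernel_bound:
  assumes "0 \<le> r" "r \<le> 1" "0 \<le> b"
  shows "\<bar>abel_kernel b k r t\<bar> \<le> 2 powr b"
proof -
  have "\<bar>abel_kernel b k r t\<bar>
      \<le> norm (cis (- 2 * real k * t) * (1 + complex_of_real r * cis (2 * t)) powr complex_of_real b)"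
    unfolding abel_kernel_def by (rule abs_Re_le_cmod)
  also have "\<dots> = norm (1 + complex_of_real r * cis (2 * t)) powr b"
    by (simp add: norm_mult norm_powr_real_powr')
  also have "\<dots> \<le> 2 powr b"
  proof (rule powr_mono2)
    have "norm (1 + complex_of_real r * cis (2 * t)) \<le> norm (1::complex) + norm (complex_of_real r * cis (2 * t))"
      by (rule norm_triangle_ineq)
    also have "\<dots> \<le> 2" using assms by (simp add: norm_mult)
    finally show "norm (1 + complex_of_real r * cis (2 * t)) \<le> 2" .
  qed (use assms in auto)
  finally show ?thesis .
qed

text \<open>Pointwise continuity in \<open>r\<close> at \<open>r = 1\<close>: \<open>1 + e^(2it)\<close> stays off the branch cut.\<close>
lemma abel_kernel_tendsto:
  assumes "-pi/2 < t" "t < pi/2" and r: "r \<longlonglongrightarrow> 1"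
  shows "(\<lambda>j. abel_kernel b k (r j) t) \<longlonglongrightarrow> abel_kernel b k 1 t"
proof -
  have "Re (1 + cis (2 * t)) = 2 * cos t * cos t" by (simp add: cos_double_cos power2_eq_square)
  then have "Re (1 + cis (2 * t)) > 0" using assms by (simp add: cos_gt_zero_pi)
  then have off_cut: "1 + cis (2 * t) \<notin> \<real>\<^sub>\<le>\<^sub>0"
    by (metis complex_nonpos_Reals_iff not_le)
  have "(\<lambda>j. 1 + complex_of_real (r j) * cis (2 * t)) \<longlonglongrightarrow> 1 + complex_of_real 1 * cis (2 * t)"
    by (intro tendsto_intros r)
  then have "(\<lambda>j. (1 + complex_of_real (r j) * cis (2 * t)) powr complex_of_real b)
      \<longlonglongrightarrow> (1 + cis (2 * t)) powr complex_of_real b"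
    using off_cut by (intro tendsto_powr_complex) auto
  then show ?thesis unfolding abel_kernel_def of_real_1 mult_1_left
    by (intro tendsto_Re tendsto_mult[OF tendsto_const])
qed

lemma cos_power_integral:
  assumes "0 \<le> b"
  shows "((\<lambda>t. (2 * cos t) powr b * cos ((b - 2 * real k) * t)) has_integral pi * (b gchoose k))
           {-pi/2<..<pi/2}"
proof -
  define r where "r j = 1 - inverse (real (Suc j))" for j
  have r01: "0 \<le> r j" "r j < 1" for j unfolding r_def by (auto simp: field_simps)
  have r_lim: "r \<longlonglongrightarrow> 1" unfolding r_def
    using LIMSEQ_inverse_real_of_nat_add_minus[of 1] by simp
  define S where "S = {-pi/2<..<pi/2}"
  have approx: "(abel_kernel b k (r j) has_integral pi * (b gchoose k) * r j ^ k) S" for j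
    unfolding S_def using abel_kernel_integral[OF r01[of j]] has_integral_Icc_iff_Ioo by blast
  have dominator: "(\<lambda>t. 2 powr b) integrable_on S" unfolding S_def
    using integrable_on_Icc_iff_Ioo integrable_const_ivl by blast
  have bound: "norm (abel_kernel b k (r j) t) \<le> 2 powr b" for j t
    using abel_kernel_bound[of "r j" b k t] r01[of j] assms by simp
  have conv: "(\<lambda>j. abel_kernel b k (r j) t) \<longlonglongrightarrow> abel_kernel b k 1 t" if "t \<in> S" for t
    using that abel_kernel_tendsto[OF _ _ r_lim] unfolding S_def by auto
  have approx_int: "abel_kernel b k (r j) integrable_on S" for j using approx by blast
  note dc = dominated_convergence[of "\<lambda>j. abel_kernel b k (r j)" S "\<lambda>_. 2 powr b" "abel_kernel b k 1",
      OF approx_int dominator bound conv]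
  have "(\<lambda>j. integral S (abel_kernel b k (r j))) \<longlonglongrightarrow> pi * (b gchoose k) * 1 ^ k"
    unfolding integral_unique[OF approx] by (intro tendsto_intros r_lim)
  then have "integral S (abel_kernel b k 1) = pi * (b gchoose k)"
    using dc(2) approx LIMSEQ_unique by fastforce
  then have "(abel_kernel b k 1 has_integral pi * (b gchoose k)) S"
    using dc(1) approx_int integrable_integral by metis
  then show ?thesis unfolding S_def
    by (rule has_integral_cong[THEN iffD1, rotated]) (simp add: abel_kernel_at_one)
qed

section \<open>The density and the substitution \<open>x = 2 sin t\<close>\<close>

lemma two_sin_bounds:
  assumes "-pi/2 < t" "t < pi/2"
  shows "2 * sin t \<in> {-2<..<2}"
proof -
  have "cos t > 0" using assms by (simp add: cos_gt_zero_pi)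
  then have "(sin t)^2 < 1" using sin_squared_eq[of t] by (simp add: power2_eq_square)
  then have "\<bar>sin t\<bar> < 1" by (simp add: abs_square_less_1)
  then show ?thesis by auto
qed

lemma continuous_on_nu_dens: "continuous_on {-2<..<2} (nu_dens lam)"
proof -
  have pos: "4 - x^2 > 0" if "x \<in> {-2<..<2}" for x :: real
  proof -
    have "(2 - x) * (2 + x) > 0" using that by (intro mult_pos_pos) auto
    then show ?thesis by (simp add: power2_eq_square algebra_simps)
  qed
  have arcsin_cont: "continuous_on {-2<..<2} (\<lambda>x::real. arcsin (x / 2))"
    by (intro continuous_on_arcsin continuous_intros) auto
  have powr_cont: "continuous_on {-2<..<2} (\<lambda>x::real. (4 - x^2) powr (- 1 / (2 * lam)))"
    by (intro continuous_on_powr continuous_intros) (use pos in force)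
  show ?thesis unfolding nu_dens_def by (intro continuous_intros arcsin_cont powr_cont)
qed

lemma set_borel_measurable_nu_dens: "set_borel_measurable lborel {-2<..<2} (nu_dens lam)"
  unfolding set_borel_measurable_def
  using borel_measurable_continuous_on_indicator[OF _ continuous_on_nu_dens] by simp

text \<open>For \<open>\<lambda> \<ge> 1\<close> the cosine factor has argument in \<open>[-\<pi>/2, \<pi>/2]\<close>, so the density is nonnegative.\<close>
lemma nu_dens_nonneg:
  assumes "lam \<ge> 1" "x \<in> {-2<..<2}"
  shows "0 \<le> nu_dens lam x"
proof -
  define t where "t = arcsin (x / 2)"
  have "-(pi/2) \<le> t" "t \<le> pi/2" unfolding t_def using assms
    by (intro arcsin_lbound arcsin_ubound; simp)+
  moreover have "0 \<le> 1 - 1/lam" "1 - 1/lam \<le> 1" using assms by (auto simp: field_simps)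
  ultimately have "\<bar>(1 - 1/lam) * t\<bar> \<le> \<bar>t\<bar>" "\<bar>t\<bar> \<le> pi/2"
    by (simp_all add: abs_mult mult_left_le_one_le abs_le_iff)
  then have "\<bar>(1 - 1/lam) * t\<bar> \<le> pi/2" by linarith
  then have "0 \<le> cos ((1 - 1/lam) * t)" by (intro cos_ge_zero) auto
  then show ?thesis unfolding nu_dens_def t_def[symmetric] by simp
qed

lemma nu_dens_even:
  assumes "x \<in> {-2<..<2}"
  shows "nu_dens lam (-x) = nu_dens lam x"
  using assms arcsin_minus[of "x/2"] unfolding nu_dens_def by simp

lemma nu_dens_sin_substitution:
  assumes "-pi/2 < t" "t < pi/2"
  shows "nu_dens lam (2 * sin t) * (2 * cos t) = (2 * cos t) powr (1 - 1/lam) * cos ((1 - 1/lam) * t)"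
proof -
  have c: "cos t > 0" using assms by (simp add: cos_gt_zero_pi)
  have "arcsin (2 * sin t / 2) = t" using assms by (simp add: arcsin_sin)
  moreover have square: "4 - (2 * sin t)^2 = (2 * cos t) powr 2"
    using c by (simp add: powr_realpow power_mult_distrib sin_squared_eq algebra_simps)
  have "(4 - (2 * sin t)^2) powr (- 1 / (2 * lam)) = (2 * cos t) powr (- 1 / lam)"
    unfolding square powr_powr by simp
  ultimately have "nu_dens lam (2 * sin t) * (2 * cos t)
      = cos ((1 - 1/lam) * t) * ((2 * cos t) powr (- 1 / lam) * (2 * cos t) powr 1)"
    unfolding nu_dens_def using c by simp
  also have "\<dots> = (2 * cos t) powr (1 - 1/lam) * cos ((1 - 1/lam) * t)"
    using c by (simp add: powr_diff powr_minus divide_inverse mult.commute)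
  finally show ?thesis .
qed

lemma nonneg_has_integral_imp_set_integral:
  fixes f :: "real \<Rightarrow> real"
  assumes "open S" "continuous_on S f" "(f has_integral I) S" "\<And>x. x \<in> S \<Longrightarrow> 0 \<le> f x"
  shows "set_integrable lborel S f" "(LINT x:S|lborel. f x) = I"
proof -
  have "f absolutely_integrable_on S"
    using assms by (intro nonnegative_absolutely_integrable_1) auto
  then have "integrable lebesgue (\<lambda>x. indicator S x *\<^sub>R f x)"
    unfolding set_integrable_def .
  moreover have "(\<lambda>x. indicator S x *\<^sub>R f x) \<in> borel_measurable lborel"
    using borel_measurable_continuous_on_indicator[OF _ assms(2)] assms(1) by simp
  ultimately have "integrable lborel (\<lambda>x. indicator S x *\<^sub>R f x)"
    using integrable_completion by blast
  then show si: "set_integrable lborel S f" unfolding set_integrable_def .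
  show "(LINT x:S|lborel. f x) = I"
    using set_borel_integral_eq_integral(2)[OF si] assms(3) integral_unique by metis
qed

lemma sin_angle_set_integral:
  fixes f :: "real \<Rightarrow> real"
  assumes cont: "continuous_on {-2<..<2} f"
    and nonneg: "\<And>x. x \<in> {-2<..<2} \<Longrightarrow> 0 \<le> f x"
    and angle: "((\<lambda>t. f (2 * sin t) * (2 * cos t)) has_integral I) {-pi/2<..<pi/2}"
  shows "set_integrable lborel {-pi/2<..<pi/2} (\<lambda>t. f (2 * sin t) * (2 * cos t))"
    and "(LBINT t:{-pi/2<..<pi/2}. f (2 * sin t) * (2 * cos t)) = I"
proof -
  let ?T = "{-pi/2<..<pi/2}"
  have "continuous_on ?T (\<lambda>t. f (2 * sin t))"
    by (rule continuous_on_compose2[OF cont]) (auto intro!: continuous_intros two_sin_bounds)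
  then have angle_cont: "continuous_on ?T (\<lambda>t. f (2 * sin t) * (2 * cos t))"
    by (intro continuous_intros)
  have angle_nonneg: "0 \<le> f (2 * sin t) * (2 * cos t)" if "t \<in> ?T" for t
  proof -
    have "-pi/2 < t" "t < pi/2" using that by auto
    then have "0 \<le> f (2 * sin t)" "0 \<le> cos t"
      using nonneg[OF two_sin_bounds] cos_ge_zero[of t] by auto
    then show ?thesis by simp
  qed
  from nonneg_has_integral_imp_set_integral[OF _ angle_cont angle angle_nonneg]
  show "set_integrable lborel ?T (\<lambda>t. f (2 * sin t) * (2 * cos t))"
    and "(LBINT t:?T. f (2 * sin t) * (2 * cos t)) = I" by simp_all
qed

lemma set_integral_sin_substitution:
  fixes f :: "real \<Rightarrow> real"
  assumes cont: "continuous_on {-2<..<2} f"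
    and nonneg: "\<And>x. x \<in> {-2<..<2} \<Longrightarrow> 0 \<le> f x"
    and angle: "((\<lambda>t. f (2 * sin t) * (2 * cos t)) has_integral I) {-pi/2<..<pi/2}"
  shows "set_integrable lborel {-2<..<2} f" "(LBINT x:{-2<..<2}. f x) = I"
proof -
  let ?T = "{-pi/2<..<pi/2}"
  note angle_lebesgue = sin_angle_set_integral[OF cont nonneg angle]
  have f_at: "isCont f (2 * sin t)" if "-pi/2 < t" "t < pi/2" for t
    using cont two_sin_bounds[OF that] by (simp add: continuous_on_eq_continuous_at)
  note substitution = interval_integral_substitution_nonneg[where a="ereal (-pi/2)" and b="ereal (pi/2)"
      and g="\<lambda>t. 2 * sin t" and g'="\<lambda>t. 2 * cos t" and f=f and A="ereal (-2)" and B="ereal 2"]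
  have prems:
    "ereal (-pi/2) < ereal (pi/2)"
    "\<And>t::real. DERIV (\<lambda>t. 2 * sin t) t :> 2 * cos t"
    "\<And>t. ereal (-pi/2) < ereal t \<Longrightarrow> ereal t < ereal (pi/2) \<Longrightarrow> isCont f (2 * sin t)"
    "\<And>t::real. isCont (\<lambda>t. 2 * cos t) t"
    "\<And>t. ereal (-pi/2) < ereal t \<Longrightarrow> ereal t < ereal (pi/2) \<Longrightarrow> 0 \<le> f (2 * sin t)"
    "\<And>t. ereal (-pi/2) \<le> ereal t \<Longrightarrow> ereal t \<le> ereal (pi/2) \<Longrightarrow> 0 \<le> 2 * cos t"
    "((ereal \<circ> (\<lambda>t. 2 * sin t) \<circ> real_of_ereal) \<longlongrightarrow> ereal (-2)) (at_right (ereal (-pi/2)))"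
    "((ereal \<circ> (\<lambda>t. 2 * sin t) \<circ> real_of_ereal) \<longlongrightarrow> ereal 2) (at_left (ereal (pi/2)))"
    "set_integrable lborel (einterval (ereal (-pi/2)) (ereal (pi/2))) (\<lambda>t. f (2 * sin t) * (2 * cos t))"
  proof -
    show "ereal (-pi/2) < ereal (pi/2)" by simp
    show "DERIV (\<lambda>t. 2 * sin t) t :> 2 * cos t" for t :: real
      by (auto intro!: derivative_eq_intros)
    show "isCont (\<lambda>t. 2 * cos t) t" for t :: real
      by (intro continuous_intros)
    show "isCont f (2 * sin t)" "0 \<le> f (2 * sin t)"
      if "ereal (-pi/2) < ereal t" "ereal t < ereal (pi/2)" for t
      using that f_at nonneg[OF two_sin_bounds, of t] by auto
    show "0 \<le> 2 * cos t" if "ereal (-pi/2) \<le> ereal t" "ereal t \<le> ereal (pi/2)" for t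
      using that cos_ge_zero[of t] by simp
    show "((ereal \<circ> (\<lambda>t. 2 * sin t) \<circ> real_of_ereal) \<longlongrightarrow> ereal (-2)) (at_right (ereal (-pi/2)))"
      by (auto simp: ereal_tendsto_simps intro!: tendsto_eq_intros)
    show "((ereal \<circ> (\<lambda>t. 2 * sin t) \<circ> real_of_ereal) \<longlongrightarrow> ereal 2) (at_left (ereal (pi/2)))"
      by (auto simp: ereal_tendsto_simps intro!: tendsto_eq_intros)
    show "set_integrable lborel (einterval (ereal (-pi/2)) (ereal (pi/2))) (\<lambda>t. f (2 * sin t) * (2 * cos t))"
      using angle_lebesgue(1) by simp
  qed
  note result = substitution[OF prems]
  show "set_integrable lborel {-2<..<2} f" using result(1) by simp
  have "(LBINT x:{-2<..<2}. f x) = (LBINT t:?T. f (2 * sin t) * (2 * cos t))"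
    using result(2) by (simp add: interval_lebesgue_integral_def)
  then show "(LBINT x:{-2<..<2}. f x) = I" using angle_lebesgue(2) by simp
qed

text \<open>The explicit value of the 2n-th moment times \<open>\<pi>\<close>, as produced by the angle integral.\<close>
definition even_moment_sum :: "real \<Rightarrow> nat \<Rightarrow> real" where
  "even_moment_sum lam n =
     (\<Sum>k\<le>n. real (n choose k) * (-1) ^ k * 4 ^ (n - k) * ((1 - 1/lam + 2 * real k) gchoose k))"

text \<open>With \<open>(2 sin t)^2 = 4 - (2 cos t)^2\<close> the moment integrand expands into the integrands
  of the key integral with exponents \<open>a + 2k\<close>.\<close>
lemma even_moment_integrand_expansion:
  assumes "-pi/2 < t" "t < pi/2"
  shows "(2 * sin t) ^ (2 * n) * nu_dens lam (2 * sin t) * (2 * cos t)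
       = (\<Sum>k\<le>n. real (n choose k) * (-1) ^ k * 4 ^ (n - k)
                   * ((2 * cos t) powr (1 - 1/lam + 2 * real k) * cos ((1 - 1/lam) * t)))"
proof -
  define a where "a = 1 - 1/lam"
  define u where "u = 2 * cos t"
  have u: "0 < u" using assms unfolding u_def by (simp add: cos_gt_zero_pi)
  have square: "(2 * sin t)^2 = 4 - u^2"
    unfolding u_def by (simp add: power_mult_distrib sin_squared_eq algebra_simps)
  have "(2 * sin t) ^ (2 * n) = (4 - u^2) ^ n"
    by (simp only: power_mult square)
  also have "\<dots> = (\<Sum>k\<le>n. real (n choose k) * (-(u^2)) ^ k * 4 ^ (n - k))"
    using binomial_ring[of "-(u^2)" 4 n] by (simp add: algebra_simps)
  finally have expand: "(2 * sin t) ^ (2 * n) = (\<Sum>k\<le>n. real (n choose k) * (-(u^2)) ^ k * 4 ^ (n - k))" .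
  have powr_shift: "u powr (a + 2 * real k) = u ^ (2 * k) * u powr a" for k
  proof -
    have "u powr real (2 * k) = u ^ (2 * k)" using u by (rule powr_realpow)
    moreover have "a + 2 * real k = real (2 * k) + a" by simp
    ultimately show ?thesis by (simp only: powr_add)
  qed
  have alternate: "(-(u^2)) ^ k = (-1) ^ k * u ^ (2 * k)" for k
    by (subst power_minus) (simp only: power_mult)
  have "(2 * sin t) ^ (2 * n) * nu_dens lam (2 * sin t) * (2 * cos t)
      = (2 * sin t) ^ (2 * n) * (nu_dens lam (2 * sin t) * (2 * cos t))"
    by (simp only: mult.assoc)
  also have "\<dots> = (2 * sin t) ^ (2 * n) * (u powr a * cos (a * t))"
    unfolding nu_dens_sin_substitution[OF assms] a_def u_def ..
  also have "\<dots> = (\<Sum>k\<le>n. real (n choose k) * (-1) ^ k * 4 ^ (n - k) * (u powr (a + 2 * real k) * cos (a * t)))"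
    unfolding expand sum_distrib_right powr_shift alternate
    by (intro sum.cong refl) (simp add: ac_simps)
  finally show ?thesis unfolding a_def u_def .
qed

lemma even_moment_angle_integral:
  assumes "lam \<ge> 1"
  shows "((\<lambda>t. (2 * sin t) ^ (2 * n) * nu_dens lam (2 * sin t) * (2 * cos t))
            has_integral pi * even_moment_sum lam n) {-pi/2<..<pi/2}"
proof -
  define a where "a = 1 - 1/lam"
  have a: "0 \<le> a" using assms unfolding a_def by (simp add: field_simps)
  have term_integral: "((\<lambda>t. real (n choose k) * (-1) ^ k * 4 ^ (n - k) * ((2 * cos t) powr (a + 2 * real k) * cos (a * t)))
      has_integral real (n choose k) * (-1) ^ k * 4 ^ (n - k) * (pi * ((a + 2 * real k) gchoose k))) {-pi/2<..<pi/2}" for k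
    using cos_power_integral[of "a + 2 * real k" k] a by (intro has_integral_mult_right) simp
  have "(\<Sum>k\<le>n. real (n choose k) * (-1) ^ k * 4 ^ (n - k) * (pi * ((a + 2 * real k) gchoose k)))
      = pi * even_moment_sum lam n"
    unfolding even_moment_sum_def a_def by (simp add: sum_distrib_left algebra_simps)
  moreover have "((\<lambda>t. \<Sum>k\<le>n. real (n choose k) * (-1) ^ k * 4 ^ (n - k)
                               * ((2 * cos t) powr (a + 2 * real k) * cos (a * t)))
      has_integral (\<Sum>k\<le>n. real (n choose k) * (-1) ^ k * 4 ^ (n - k) * (pi * ((a + 2 * real k) gchoose k))))
      {-pi/2<..<pi/2}"
    by (intro has_integral_sum finite_atMost term_integral)
  ultimately have "((\<lambda>t. \<Sum>k\<le>n. real (n choose k) * (-1) ^ k * 4 ^ (n - k)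
                               * ((2 * cos t) powr (a + 2 * real k) * cos (a * t)))
      has_integral pi * even_moment_sum lam n) {-pi/2<..<pi/2}"
    by simp
  then show ?thesis
  proof (rule has_integral_cong[THEN iffD1, rotated])
    fix t :: real assume "t \<in> {-pi/2<..<pi/2}"
    then show "(\<Sum>k\<le>n. real (n choose k) * (-1) ^ k * 4 ^ (n - k)
                 * ((2 * cos t) powr (a + 2 * real k) * cos (a * t)))
        = (2 * sin t) ^ (2 * n) * nu_dens lam (2 * sin t) * (2 * cos t)"
      using even_moment_integrand_expansion[of t n lam] unfolding a_def by simp
  qed
qed

lemma even_moment_integral:
  assumes "lam \<ge> 1"
  shows "set_integrable lborel {-2<..<2} (\<lambda>x. x ^ (2 * n) * nu_dens lam x)"
    and "(LBINT x:{-2<..<2}. x ^ (2 * n) * nu_dens lam x) = pi * even_moment_sum lam n"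
proof -
  have "continuous_on {-2<..<2} (\<lambda>x. x ^ (2 * n) * nu_dens lam x)"
    by (intro continuous_intros continuous_on_nu_dens)
  moreover have "0 \<le> x ^ (2 * n) * nu_dens lam x" if "x \<in> {-2<..<2}" for x
    using nu_dens_nonneg[OF assms that] by (simp add: power_mult)
  ultimately show "set_integrable lborel {-2<..<2} (\<lambda>x. x ^ (2 * n) * nu_dens lam x)"
    and "(LBINT x:{-2<..<2}. x ^ (2 * n) * nu_dens lam x) = pi * even_moment_sum lam n"
    using set_integral_sin_substitution[OF _ _ even_moment_angle_integral[OF assms]] by blast+
qed

text \<open>Odd moments vanish: they are dominated by even ones and the density is even.\<close>
lemma odd_moment_integral:
  assumes "lam \<ge> 1"
  shows "set_integrable lborel {-2<..<2} (\<lambda>x. x ^ (2 * n + 1) * nu_dens lam x)"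
    and "(LBINT x:{-2<..<2}. x ^ (2 * n + 1) * nu_dens lam x) = 0"
proof -
  let ?S = "{-2<..<2::real}"
  let ?h = "\<lambda>x::real. x ^ (2 * n + 1) * nu_dens lam x"
  have dominator: "set_integrable lborel ?S (\<lambda>x. 2 * (x ^ (2 * n) * nu_dens lam x))"
    using even_moment_integral(1)[OF assms, of n] by simp
  have "continuous_on ?S ?h"
    by (intro continuous_intros continuous_on_nu_dens)
  then have measurable: "set_borel_measurable lborel ?S ?h"
    unfolding set_borel_measurable_def
    using borel_measurable_continuous_on_indicator[of ?S ?h] by simp
  show integrable: "set_integrable lborel ?S ?h"
  proof (rule set_integrable_bound[OF dominator measurable], intro AE_I2 impI)
    fix x :: real assume x: "x \<in> ?S"
    have "0 \<le> nu_dens lam x" using nu_dens_nonneg[OF assms x] .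
    moreover have "\<bar>x\<bar> ^ (2 * n) * \<bar>x\<bar> \<le> \<bar>x\<bar> ^ (2 * n) * 2" using x by (intro mult_left_mono) auto
    ultimately have "\<bar>x\<bar> ^ (2 * n) * \<bar>x\<bar> * nu_dens lam x \<le> \<bar>x\<bar> ^ (2 * n) * 2 * nu_dens lam x"
      by (intro mult_right_mono)
    moreover have "\<bar>x\<bar> ^ (2 * n) = x ^ (2 * n)" by (simp add: power_mult)
    ultimately show "norm (?h x) \<le> norm (2 * (x ^ (2 * n) * nu_dens lam x))"
      using \<open>0 \<le> nu_dens lam x\<close> by (simp add: abs_mult power_abs mult_ac)
  qed
  have "(LBINT x:?S. ?h x) = (LBINT x:{x. - x \<in> ?S}. ?h (- x))"
    by (rule set_integral_reflect)
  also have "{x. - x \<in> ?S} = ?S" by auto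
  also have "(LBINT x:?S. ?h (- x)) = (LBINT x:?S. - ?h x)"
    by (rule set_lebesgue_integral_cong) (auto simp: nu_dens_even)
  also have "\<dots> = - (LBINT x:?S. ?h x)"
    by (rule set_integral_uminus[OF integrable])
  finally show "(LBINT x:?S. ?h x) = 0" by simp
qed

lemma moment_set_integrable:
  assumes "lam \<ge> 1"
  shows "set_integrable lborel {-2<..<2} (\<lambda>x. x ^ k * nu_dens lam x)"
proof (cases "even k")
  case True
  then obtain n where "k = 2 * n" by (elim evenE)
  then show ?thesis using even_moment_integral(1)[OF assms, of n] by simp
next
  case False
  then obtain n where "k = 2 * n + 1" by (elim oddE)
  then show ?thesis using odd_moment_integral(1)[OF assms, of n] by simp
qed

lemma nu_dens_normalization:
  assumes "lam \<ge> 1"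
  shows "interval_lebesgue_integrable lborel (-2) 2 (nu_dens lam)"
    and "c_const lam = pi"
proof -
  have interval: "einterval (-2) 2 = {-2<..<2::real}"
    using einterval_eq_Icc[of "-2" 2] by simp
  have zeroth: "even_moment_sum lam 0 = 1" by (simp add: even_moment_sum_def)
  show "interval_lebesgue_integrable lborel (-2) 2 (nu_dens lam)"
    unfolding interval_lebesgue_integrable_def interval
    using even_moment_integral(1)[OF assms, of 0] by simp
  show "c_const lam = pi"
    unfolding c_const_def interval_lebesgue_integral_def interval
    using even_moment_integral(2)[OF assms, of 0] zeroth by simp
qed

section \<open>Closed forms of the even moments and of the normalising constant\<close>

lemma prod_shifted_eq_pochhammer:
  fixes c :: real
  shows "(\<Prod>m=k+2..2*k+1. real m - c) = pochhammer (real k + 2 - c) k"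
proof -
  have "{k+2..2*k+1} = {0 + (k+2)..<k + (k+2)}" by auto
  then have "(\<Prod>m=k+2..2*k+1. real m - c) = (\<Prod>i=0..<k. real (i + (k+2)) - c)"
    by (simp only: prod.shift_bounds_nat_ivl)
  also have "\<dots> = (\<Prod>i=0..<k. (real k + 2 - c) + real i)"
    by (intro prod.cong refl) simp
  finally show ?thesis by (simp add: pochhammer_prod)
qed

lemma gchoose_shift_eq_pochhammer:
  fixes a :: real
  shows "(a + 2 * real k gchoose k) = pochhammer (a + 1 + real k) k / fact k"
  by (simp add: gbinomial_pochhammer' algebra_simps)

lemma even_moment_sum_product_form:
  "even_moment_sum lam n = (\<Sum>k=0..n. real (n choose k) * 4 ^ (n - k) * (-1) ^ k / fact k
                              * (\<Prod>m=k+2..2*k+1. real m - 1 / lam))"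
  unfolding even_moment_sum_def prod_shifted_eq_pochhammer gchoose_shift_eq_pochhammer atLeast0AtMost
  by (intro sum.cong refl) (simp add: algebra_simps)

lemma pochhammer_half_shift_product:
  fixes z :: real
  shows "pochhammer z j * pochhammer (z + 1/2) j = pochhammer (2 * z) (2 * j) / 4 ^ j"
proof -
  have "(of_nat (2 ^ (2 * j)) :: real) = 4 ^ j" by (simp add: power_mult)
  then have "pochhammer (2 * z) (2 * j) = 4 ^ j * (pochhammer z j * pochhammer (z + 1/2) j)"
    using pochhammer_double[of z j] by (simp only: mult.assoc)
  then show ?thesis by simp
qed

lemma hypergeometric_term_eq:
  fixes z :: real
  assumes "z > 0" "j \<le> n"
  shows "4 ^ n * (pochhammer (- real n) j * pochhammer z j * pochhammer (z + 1/2) j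
      / (pochhammer (2 * z) j * pochhammer 1 j) * 1 ^ j / fact j)
   = real (n choose j) * (-1) ^ j * 4 ^ (n - j) * (pochhammer (2 * z + real j) j / fact j)"
proof -
  have split: "pochhammer (2 * z) (2 * j) = pochhammer (2 * z) j * pochhammer (2 * z + real j) j"
  proof -
    have "2 * j = j + j" by simp
    then show ?thesis by (simp only: pochhammer_product')
  qed
  have negative: "pochhammer (- real n) j = (-1) ^ j * (real (n choose j) * fact j)"
  proof -
    have "pochhammer (real n - real j + 1) j = real (n choose j) * fact j"
      unfolding binomial_gbinomial gbinomial_pochhammer' by simp
    then show ?thesis unfolding pochhammer_minus by simp
  qed
  have one: "pochhammer 1 j = (fact j :: real)" by (simp add: pochhammer_fact)
  have nonzero: "pochhammer (2 * z) j \<noteq> (0::real)" using pochhammer_pos[of "2 * z" j] assms by simp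
  have four: "4 ^ n = (4::real) ^ (n - j) * 4 ^ j" using assms by (simp add: power_add[symmetric])
  have "pochhammer (- real n) j * pochhammer z j * pochhammer (z + 1/2) j
      = (-1) ^ j * (real (n choose j) * fact j) * (pochhammer (2 * z) j * pochhammer (2 * z + real j) j / 4 ^ j)"
    by (simp only: negative mult.assoc pochhammer_half_shift_product split)
  then show ?thesis using nonzero unfolding one four by (simp add: field_simps)
qed

text \<open>The hypergeometric form of the moments; with \<open>a\<^sub>1 = -n\<close> the series has only \<open>n + 1\<close>
  nonzero terms.\<close>
lemma even_moment_sum_hypergeometric:
  assumes "lam \<ge> 1"
  shows "2 ^ (2 * n) * hyp3F2 (- real n) (1 - 1 / (2 * lam)) (3 / 2 - 1 / (2 * lam)) (2 - 1 / lam) 1 1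
         = even_moment_sum lam n"
proof -
  define z where "z = 1 - 1 / (2 * lam)"
  have z: "z > 0" using assms unfolding z_def by (simp add: field_simps)
  have params: "3 / 2 - 1 / (2 * lam) = z + 1/2" "2 - 1 / lam = 2 * z"
    unfolding z_def by (simp_all add: field_simps)
  let ?t = "\<lambda>j. pochhammer (- real n) j * pochhammer z j * pochhammer (z + 1/2) j
      / (pochhammer (2 * z) j * pochhammer 1 j) * 1 ^ j / fact j"
  have "hyp3F2 (- real n) z (z + 1/2) (2 * z) 1 1 = (\<Sum>j\<le>n. ?t j)"
    unfolding hyp3F2_def by (rule suminf_finite) (auto simp: pochhammer_of_nat_eq_0_iff)
  then have "2 ^ (2 * n) * hyp3F2 (- real n) z (z + 1/2) (2 * z) 1 1 = (\<Sum>j\<le>n. 4 ^ n * ?t j)"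
    by (simp add: sum_distrib_left power_mult)
  also have "\<dots> = (\<Sum>j\<le>n. real (n choose j) * (-1) ^ j * 4 ^ (n - j) * (pochhammer (2 * z + real j) j / fact j))"
    by (intro sum.cong refl hypergeometric_term_eq z) auto
  also have "\<dots> = even_moment_sum lam n"
    unfolding even_moment_sum_def gchoose_shift_eq_pochhammer
    by (intro sum.cong refl) (simp add: z_def algebra_simps)
  finally show ?thesis unfolding params z_def .
qed

text \<open>Legendre's duplication formula \<open>\<Gamma>(z) \<Gamma>(z + 1/2) = 2^(1-2z) \<surd>\<pi> \<Gamma>(2z)\<close> at
  \<open>z = 1 - 1/(2\<lambda>)\<close> shows that the Gamma expression for \<open>c_\<lambda>\<close> equals \<open>\<pi>\<close>.\<close>
lemma gamma_expression_eq_pi: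
  assumes "lam \<ge> 1"
  shows "2 powr (1 - 1 / lam) * sqrt pi * Gamma (1 - 1 / (2 * lam)) * Gamma (3 / 2 - 1 / (2 * lam))
           / Gamma (2 - 1 / lam) = pi"
proof -
  define z where "z = 1 - 1 / (2 * lam)"
  have z: "z > 0" using assms unfolding z_def by (simp add: field_simps)
  have params: "3 / 2 - 1 / (2 * lam) = z + 1/2" "2 - 1 / lam = 2 * z" "1 - 1 / lam = 2 * z - 1"
    unfolding z_def by (simp_all add: field_simps)
  have not_pole: "complex_of_real z \<notin> \<int>\<^sub>\<le>\<^sub>0" "complex_of_real z + 1/2 \<notin> \<int>\<^sub>\<le>\<^sub>0"
    using z by (auto elim!: nonpos_Ints_cases simp: complex_eq_iff)
  from Gamma_legendre_duplication[OF not_pole]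
  have "complex_of_real (Gamma z * Gamma (z + 1/2))
      = complex_of_real (exp ((1 - 2 * z) * ln 2) * sqrt pi * Gamma (2 * z))"
    by (simp add: Gamma_complex_of_real[symmetric] exp_of_real[symmetric])
  then have duplication: "Gamma z * Gamma (z + 1/2) = 2 powr (1 - 2 * z) * sqrt pi * Gamma (2 * z)"
    by (simp only: of_real_eq_iff powr_def) simp
  have "Gamma (2 * z) > 0" using z by (intro Gamma_real_pos) simp
  moreover have "2 powr (2 * z - 1) * 2 powr (1 - 2 * z) = (1::real)" by (simp add: powr_add[symmetric])
  ultimately show ?thesis unfolding params z_def[symmetric]
    by (simp add: mult.assoc duplication) (simp add: field_simps)
qed

section \<open>Moments of a measure given by a density restricted to a set\<close>

lemma density_indicator_moment:
  fixes d h :: "real \<Rightarrow> real" and c :: real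
  assumes d_meas: "set_borel_measurable lborel S d"
    and d_nonneg: "\<And>x. x \<in> S \<Longrightarrow> 0 \<le> d x" and c: "0 < c"
    and h_meas: "h \<in> borel_measurable lborel"
    and h_int: "set_integrable lborel S (\<lambda>x. h x * d x)"
  shows "integrable (density lborel (\<lambda>x. ennreal (indicator S x * d x / c))) h"
    and "integral\<^sup>L (density lborel (\<lambda>x. ennreal (indicator S x * d x / c))) h
           = (LINT x:S|lborel. h x * d x) / c"
proof -
  define g where "g x = indicator S x * d x / c" for x
  have g_meas: "g \<in> borel_measurable lborel"
    using d_meas unfolding g_def set_borel_measurable_def by simp
  have g_nonneg: "AE x in lborel. 0 \<le> g x"
    using d_nonneg c unfolding g_def by (auto split: split_indicator)
  have weighted: "(\<lambda>x. g x *\<^sub>R h x) = (\<lambda>x. (1 / c) * (indicator S x *\<^sub>R (h x * d x)))"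
    unfolding g_def by (simp add: fun_eq_iff)
  have "integrable lborel (\<lambda>x. g x *\<^sub>R h x)"
    unfolding weighted using h_int unfolding set_integrable_def by (rule integrable_mult_right)
  then show "integrable (density lborel (\<lambda>x. ennreal (indicator S x * d x / c))) h"
    unfolding g_def[symmetric] integrable_density[OF h_meas g_meas g_nonneg] .
  show "integral\<^sup>L (density lborel (\<lambda>x. ennreal (indicator S x * d x / c))) h
           = (LINT x:S|lborel. h x * d x) / c"
    unfolding g_def[symmetric] integral_density[OF h_meas g_meas g_nonneg] weighted
    by (simp add: set_lebesgue_integral_def)
qed

lemma prob_space_density_indicator:
  fixes d :: "real \<Rightarrow> real" and c :: real
  assumes "set_borel_measurable lborel S d" "\<And>x. x \<in> S \<Longrightarrow> 0 \<le> d x" "0 < c"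
    and "set_integrable lborel S d" "(LINT x:S|lborel. d x) = c"
  shows "prob_space (density lborel (\<lambda>x. ennreal (indicator S x * d x / c)))"
    (is "prob_space ?M")
proof (rule prob_spaceI)
  note total = density_indicator_moment[where h="\<lambda>_. 1", OF assms(1-3)]
  have integrable: "integrable ?M (\<lambda>_. 1::real)" and "integral\<^sup>L ?M (\<lambda>_. 1::real) = 1"
    using total assms(3-5) by simp_all
  then have "measure ?M (space ?M) = 1" by simp
  moreover have "emeasure ?M (space ?M) \<noteq> \<infinity>"
    using integrable by (simp add: integrable_iff_bounded)
  ultimately show "emeasure ?M (space ?M) = 1"
    by (simp add: emeasure_eq_ennreal_measure)
qed

lemma nu_moments:
  assumes "lam \<ge> 1"
  shows "prob_space (nu lam)"
    and "integrable (nu lam) (\<lambda>x. x ^ k)"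
    and "integral\<^sup>L (nu lam) (\<lambda>x. x ^ k) = (LBINT x:{-2<..<2}. x ^ k * nu_dens lam x) / pi"
proof -
  let ?S = "{-2<..<2::real}"
  have nu_density: "nu lam = density lborel (\<lambda>x. ennreal (indicator ?S x * nu_dens lam x / pi))"
    unfolding nu_def nu_dens_normalization(2)[OF assms] ..
  have power_measurable: "(\<lambda>x::real. x ^ k) \<in> borel_measurable lborel" by measurable
  note moment = density_indicator_moment[OF set_borel_measurable_nu_dens nu_dens_nonneg[OF assms]
      pi_gt_zero power_measurable moment_set_integrable[OF assms], folded nu_density]
  show "integrable (nu lam) (\<lambda>x. x ^ k)" by (rule moment(1))
  show "integral\<^sup>L (nu lam) (\<lambda>x. x ^ k) = (LBINT x:?S. x ^ k * nu_dens lam x) / pi" by (rule moment(2))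
  show "prob_space (nu lam)"
    unfolding nu_density
  proof (rule prob_space_density_indicator[OF set_borel_measurable_nu_dens nu_dens_nonneg[OF assms] pi_gt_zero])
    show "set_integrable lborel ?S (nu_dens lam)"
      using moment_set_integrable[OF assms, of 0] by simp
    show "(LBINT x:?S. nu_dens lam x) = pi"
      using even_moment_integral(2)[OF assms, of 0] by (simp add: even_moment_sum_def)
  qed
qed

theorem mainTheorem7:
  fixes lam :: real
  assumes "lam \<ge> 1"
  shows "interval_lebesgue_integrable lborel (-2) 2 (nu_dens lam)
    \<and> c_const lam = 2 powr (1 - 1 / lam) * sqrt pi
          * Gamma (1 - 1 / (2 * lam)) * Gamma (3 / 2 - 1 / (2 * lam)) / Gamma (2 - 1 / lam)
    \<and> prob_space (nu lam)
    \<and> (\<forall>k::nat. integrable (nu lam) (\<lambda>x. x ^ k))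
    \<and> (\<forall>n::nat. integral\<^sup>L (nu lam) (\<lambda>x. x ^ (2 * n + 1)) = 0)
    \<and> (\<forall>n::nat. integral\<^sup>L (nu lam) (\<lambda>x. x ^ (2 * n))
          = 2 ^ (2 * n) * hyp3F2 (- real n) (1 - 1 / (2 * lam)) (3 / 2 - 1 / (2 * lam))
                                 (2 - 1 / lam) 1 1)
    \<and> (\<forall>n::nat. integral\<^sup>L (nu lam) (\<lambda>x. x ^ (2 * n))
          = (\<Sum>k=0..n. real (n choose k) * 4 ^ (n - k) * (-1) ^ k / fact k
               * (\<Prod>m=k+2..2*k+1. real m - 1 / lam)))"
proof -
  have odd: "integral\<^sup>L (nu lam) (\<lambda>x. x ^ (2 * n + 1)) = 0" for n
    using nu_moments(3)[OF assms, of "2 * n + 1"] odd_moment_integral(2)[OF assms, of n] by simp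
  have even: "integral\<^sup>L (nu lam) (\<lambda>x. x ^ (2 * n)) = even_moment_sum lam n" for n
    using nu_moments(3)[OF assms, of "2 * n"] even_moment_integral(2)[OF assms, of n] by simp
  have c_gamma: "c_const lam = 2 powr (1 - 1 / lam) * sqrt pi
          * Gamma (1 - 1 / (2 * lam)) * Gamma (3 / 2 - 1 / (2 * lam)) / Gamma (2 - 1 / lam)"
    unfolding nu_dens_normalization(2)[OF assms] gamma_expression_eq_pi[OF assms] ..
  have even_hypergeometric: "integral\<^sup>L (nu lam) (\<lambda>x. x ^ (2 * n))
      = 2 ^ (2 * n) * hyp3F2 (- real n) (1 - 1 / (2 * lam)) (3 / 2 - 1 / (2 * lam)) (2 - 1 / lam) 1 1" for n
    unfolding even even_moment_sum_hypergeometric[OF assms] ..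
  have even_product: "integral\<^sup>L (nu lam) (\<lambda>x. x ^ (2 * n))
      = (\<Sum>k=0..n. real (n choose k) * 4 ^ (n - k) * (-1) ^ k / fact k * (\<Prod>m=k+2..2*k+1. real m - 1 / lam))" for n
    unfolding even by (rule even_moment_sum_product_form)
  show ?thesis
    by (intro conjI allI nu_dens_normalization(1)[OF assms] c_gamma nu_moments(1,2)[OF assms] odd
        even_hypergeometric even_product)
qed

end
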